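(* Let $Q\subset\mathbb R^2$ be an $\mathbb R$-unimodular copy of the unit square $[0,1]^2$, and let $P\subset\mathbb R^2$ be a parallelogram such that the relative interior of each of the four facets of $P$ contains exactly one vertex of $Q$ (distinct facets containing distinct vertices). Then $P$ is $\mathbb R$-$\Delta_2$-free and inclusion-maximal among $\mathbb R$-$\Delta_2$-free convex sets.
   Context: $\Delta_2=\mathrm{conv}(\mathbf 0,e_1,e_2)$. An $\mathbb R$-unimodular copy of $X$ is $T(X)$ where $T(x)=Mx+b$, $M\in\mathrm{GL}_2(\mathbb Z)$, $b\in\mathbb R^2$. A convex set is $\mathbb R$-$\Delta_2$-free if its relative interior contains no $\mathbb R$-unimodular copy of $\Delta_2$. *)

theory Defs
  imports "HOL-Analysis.Analysis"
begin

definition R_unimodular_map :: "(real^2 \<Rightarrow> real^2) \<Rightarrow> bool" where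
  "R_unimodular_map T \<longleftrightarrow>
     (\<exists>(M::real^2^2) b. (\<forall>i j. M$i$j \<in> \<int>) \<and> \<bar>det M\<bar> = 1 \<and> T = (\<lambda>x. M *v x + b))"

definition Delta2 :: "(real^2) set" where
  "Delta2 = convex hull {0, axis 1 1, axis 2 1}"

definition unit_square :: "(real^2) set" where
  "unit_square = cbox 0 1"

definition R_Delta2_free :: "(real^2) set \<Rightarrow> bool" where
  "R_Delta2_free K \<longleftrightarrow> convex K \<and>
     \<not> (\<exists>T. R_unimodular_map T \<and> T ` Delta2 \<subseteq> rel_interior K)"

definition maximal_R_Delta2_free :: "(real^2) set \<Rightarrow> bool" where
  "maximal_R_Delta2_free K \<longleftrightarrow> R_Delta2_free K \<and>
     (\<forall>L. R_Delta2_free L \<and> K \<subseteq> L \<longrightarrow> L = K)"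

definition parallelogram :: "(real^2) set \<Rightarrow> bool" where
  "parallelogram P \<longleftrightarrow> (\<exists>a u v. u$1 * v$2 - u$2 * v$1 \<noteq> 0 \<and>
      P = convex hull {a, a + u, a + u + v, a + v})"

end

theory Submission
  imports Defs
begin

text \<open>
  Describe \<open>P\<close> by the affine coordinates \<open>(s, t) \<in> [0,1]\<^sup>2\<close> of its frame \<open>(a; u, v)\<close> and
  \<open>Q\<close> as \<open>b + [0,1] c\<^sub>1 + [0,1] c\<^sub>2\<close> for a lattice basis \<open>c\<^sub>1, c\<^sub>2\<close>. The vertices of \<open>Q\<close> on the
  sides \<open>s = 0\<close> and \<open>s = 1\<close> are opposite corners of \<open>Q\<close>, and so are those on \<open>t = 0\<close> and
  \<open>t = 1\<close>. Hence, with respect to \<open>c\<^sub>1, c\<^sub>2\<close>, the linear part of one of \<open>s\<close>, \<open>t\<close> has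
  coefficients of equal sign and absolute sum at least \<open>1\<close>, and the other has coefficients of
  opposite sign whose difference is at least \<open>1\<close> in absolute value. So every lattice vector with
  non-zero coordinates in both \<open>c\<^sub>1\<close> and \<open>c\<^sub>2\<close> changes \<open>s\<close> or \<open>t\<close> by at least \<open>1\<close>. Some edge of every unimodular
  triangle is such a vector, so no unimodular triangle fits into the open parallelogram.

  If a convex \<open>L \<supset> P\<close> contains a point beyond, say, the side \<open>s = 0\<close>, then a small translation
  by \<open>(-\<epsilon>, \<epsilon>)\<close> in \<open>(s, t)\<close>-coordinates moves the three vertices of \<open>Q\<close> on the sides
  \<open>s = 0\<close>, \<open>t = 0\<close>, \<open>s = 1\<close> into the interior of \<open>L\<close>. Any three vertices of \<open>Q\<close> span a
  unimodular triangle, so \<open>L\<close> is not \<open>\<Delta>\<^sub>2\<close>-free.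
\<close>

section \<open>Affine coordinates of a parallelogram\<close>

definition cross2 :: "real^2 \<Rightarrow> real^2 \<Rightarrow> real" where
  "cross2 p q = p$1 * q$2 - p$2 * q$1"

definition frame_map :: "real^2 \<Rightarrow> real^2 \<Rightarrow> real^2 \<Rightarrow> real^2 \<Rightarrow> real^2" where
  "frame_map a u v y = a + y$1 *\<^sub>R u + y$2 *\<^sub>R v"

text \<open>Cramer's rule for the coefficients of \<open>u\<close> and \<open>v\<close> in \<open>x - a\<close>; both are \<open>0\<close> when \<open>u\<close>
  and \<open>v\<close> are parallel.\<close>

definition coord_u :: "real^2 \<Rightarrow> real^2 \<Rightarrow> real^2 \<Rightarrow> real^2 \<Rightarrow> real" where
  "coord_u a u v x = cross2 (x - a) v / cross2 u v"

definition coord_v :: "real^2 \<Rightarrow> real^2 \<Rightarrow> real^2 \<Rightarrow> real^2 \<Rightarrow> real" where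
  "coord_v a u v x = cross2 u (x - a) / cross2 u v"

definition para_box :: "real^2 \<Rightarrow> real^2 \<Rightarrow> real^2 \<Rightarrow> (real^2) set" where
  "para_box a u v =
     {x. 0 \<le> coord_u a u v x \<and> coord_u a u v x \<le> 1 \<and> 0 \<le> coord_v a u v x \<and> coord_v a u v x \<le> 1}"

definition para_open :: "real^2 \<Rightarrow> real^2 \<Rightarrow> real^2 \<Rightarrow> (real^2) set" where
  "para_open a u v =
     {x. 0 < coord_u a u v x \<and> coord_u a u v x < 1 \<and> 0 < coord_v a u v x \<and> coord_v a u v x < 1}"

definition unit_corners :: "(real^2) set" where
  "unit_corners = {y. \<forall>i. y$i = 0 \<or> y$i = 1}"

lemma linear_coord_u: "linear (coord_u 0 u v)" and linear_coord_v: "linear (coord_v 0 u v)"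
  by (auto intro!: linearI simp: coord_u_def coord_v_def cross2_def divide_inverse algebra_simps)

lemma coord_u_shift: "coord_u a u v x = coord_u 0 u v (x - a)"
  and coord_v_shift: "coord_v a u v x = coord_v 0 u v (x - a)"
  by (simp_all add: coord_u_def coord_v_def)

lemma coord_add:
  "coord_u a u v (x + e) = coord_u a u v x + coord_u 0 u v e"
  "coord_v a u v (x + e) = coord_v a u v x + coord_v 0 u v e"
proof -
  have "x + e - a = (x - a) + e" by simp
  then show "coord_u a u v (x + e) = coord_u a u v x + coord_u 0 u v e"
    "coord_v a u v (x + e) = coord_v a u v x + coord_v 0 u v e"
    by (simp_all only: coord_u_shift[of a] coord_v_shift[of a] linear_add[OF linear_coord_u]
        linear_add[OF linear_coord_v])
qed

lemma coord_convex_comb: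
  assumes "p + q = 1"
  shows "coord_u a u v (p *\<^sub>R x + q *\<^sub>R y) = p * coord_u a u v x + q * coord_u a u v y"
    and "coord_v a u v (p *\<^sub>R x + q *\<^sub>R y) = p * coord_v a u v x + q * coord_v a u v y"
proof -
  have "p *\<^sub>R x + q *\<^sub>R y - a = p *\<^sub>R (x - a) + q *\<^sub>R (y - a)"
    using assms by (simp add: algebra_simps flip: scaleR_add_left)
  then show "coord_u a u v (p *\<^sub>R x + q *\<^sub>R y) = p * coord_u a u v x + q * coord_u a u v y"
    "coord_v a u v (p *\<^sub>R x + q *\<^sub>R y) = p * coord_v a u v x + q * coord_v a u v y"
    by (simp_all add: coord_u_shift[of a] coord_v_shift[of a] linear_add linear_scale
        linear_coord_u linear_coord_v)
qed

lemma coord_frame_map: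
  assumes "cross2 u v \<noteq> 0"
  shows "coord_u a u v (a + s *\<^sub>R u + t *\<^sub>R v) = s" "coord_v a u v (a + s *\<^sub>R u + t *\<^sub>R v) = t"
  using assms by (simp_all add: coord_u_def coord_v_def cross2_def field_simps)

lemma frame_map_coords:
  assumes "cross2 u v \<noteq> 0"
  shows "a + coord_u a u v x *\<^sub>R u + coord_v a u v x *\<^sub>R v = x"
proof -
  have "cross2 (x - a) v *\<^sub>R u + cross2 u (x - a) *\<^sub>R v = cross2 u v *\<^sub>R (x - a)"
    unfolding vec_eq_iff forall_2 cross2_def by (simp add: algebra_simps)
  then have "cross2 u v *\<^sub>R (coord_u a u v x *\<^sub>R u + coord_v a u v x *\<^sub>R v)
      = cross2 u v *\<^sub>R (x - a)"
    using assms by (simp add: coord_u_def coord_v_def scaleR_add_right)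
  then have "coord_u a u v x *\<^sub>R u + coord_v a u v x *\<^sub>R v = x - a"
    using assms by simp
  then show ?thesis
    by (simp add: algebra_simps)
qed

lemma coord_diff:
  "coord_u 0 u v (y - x) = coord_u a u v y - coord_u a u v x"
  "coord_v 0 u v (y - x) = coord_v a u v y - coord_v a u v x"
  using coord_add[of a u v x "y - x"] by simp_all

lemma coord_eqI:
  assumes "cross2 u v \<noteq> 0" "coord_u a u v x = coord_u a u v y" "coord_v a u v x = coord_v a u v y"
  shows "x = y"
proof -
  have "x = a + coord_u a u v x *\<^sub>R u + coord_v a u v x *\<^sub>R v"
    using frame_map_coords[OF assms(1)] by simp
  also have "\<dots> = y"
    unfolding assms(2,3) by (rule frame_map_coords[OF assms(1)])
  finally show ?thesis .
qed

lemma frame_map_translate: "frame_map a u v = (\<lambda>x. a + x) \<circ> (\<lambda>y. y$1 *\<^sub>R u + y$2 *\<^sub>R v)"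
  by (auto simp: frame_map_def)

lemma linear_lincomb2: "linear (\<lambda>y::real^2. y$1 *\<^sub>R u + y$2 *\<^sub>R v)"
  by (auto intro!: linearI simp: algebra_simps)

lemma inj_frame_map:
  assumes "cross2 u v \<noteq> 0"
  shows "inj (frame_map a u v)"
proof (rule injI)
  fix y z assume "frame_map a u v y = frame_map a u v z"
  then have "coord_u a u v (frame_map a u v y) = coord_u a u v (frame_map a u v z)"
    "coord_v a u v (frame_map a u v y) = coord_v a u v (frame_map a u v z)" by simp_all
  then show "y = z"
    by (simp add: frame_map_def coord_frame_map[OF assms] vec_eq_iff forall_2)
qed

lemma frame_map_convex_hull: "frame_map a u v ` (convex hull S) = convex hull (frame_map a u v ` S)"
  unfolding frame_map_translate image_comp[symmetric]
  by (simp add: convex_hull_linear_image[OF linear_lincomb2] convex_hull_translation)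

lemma interior_frame_map_image:
  assumes "cross2 u v \<noteq> 0"
  shows "interior (frame_map a u v ` S) = frame_map a u v ` interior S"
  using inj_frame_map[OF assms, of 0] unfolding frame_map_translate image_comp[symmetric]
  by (simp add: interior_translation interior_injective_linear_image[OF linear_lincomb2])

lemma frame_map_image_Collect:
  assumes "cross2 u v \<noteq> 0"
  shows "frame_map a u v ` {y. R (y$1) (y$2)} = {x. R (coord_u a u v x) (coord_v a u v x)}"
proof (intro set_eqI iffI)
  fix x assume "x \<in> frame_map a u v ` {y. R (y$1) (y$2)}"
  then show "x \<in> {x. R (coord_u a u v x) (coord_v a u v x)}"
    by (auto simp: frame_map_def coord_frame_map[OF assms])
next
  fix x assume "x \<in> {x. R (coord_u a u v x) (coord_v a u v x)}"
  moreover have "x = frame_map a u v (vector [coord_u a u v x, coord_v a u v x])"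
    using frame_map_coords[OF assms] by (simp add: frame_map_def)
  ultimately show "x \<in> frame_map a u v ` {y. R (y$1) (y$2)}"
    by (intro image_eqI) auto
qed

lemma frame_map_unit_square:
  assumes "cross2 u v \<noteq> 0"
  shows "frame_map a u v ` unit_square = para_box a u v"
proof -
  have "unit_square = {y. (\<lambda>s t. 0 \<le> s \<and> s \<le> 1 \<and> 0 \<le> t \<and> t \<le> 1) (y$1) (y$2)}"
    by (auto simp: unit_square_def mem_box_cart forall_2)
  then show ?thesis
    unfolding para_box_def
    using frame_map_image_Collect[OF assms, of a "\<lambda>s t. 0 \<le> s \<and> s \<le> 1 \<and> 0 \<le> t \<and> t \<le> 1"] by simp
qed

lemma frame_map_open_unit_square:
  assumes "cross2 u v \<noteq> 0"
  shows "frame_map a u v ` box 0 1 = para_open a u v"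
proof -
  have "box 0 (1::real^2) = {y. (\<lambda>s t. 0 < s \<and> s < 1 \<and> 0 < t \<and> t < 1) (y$1) (y$2)}"
    by (auto simp: mem_box_cart forall_2)
  then show ?thesis
    unfolding para_open_def
    using frame_map_image_Collect[OF assms, of a "\<lambda>s t. 0 < s \<and> s < 1 \<and> 0 < t \<and> t < 1"] by simp
qed

lemma frame_map_unit_corners:
  "frame_map a u v ` unit_corners = {a, a + u, a + u + v, a + v}"
proof -
  have corners: "unit_corners = {vector [0, 0], vector [1, 0], vector [1, 1], vector [0, 1]}"
  proof (intro set_eqI iffI)
    fix y :: "real^2" assume "y \<in> unit_corners"
    then have "y$1 = 0 \<or> y$1 = 1" "y$2 = 0 \<or> y$2 = 1"
      by (auto simp: unit_corners_def)
    moreover have "y = vector [y$1, y$2]" by (simp add: vec_eq_iff forall_2)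
    ultimately show "y \<in> {vector [0, 0], vector [1, 0], vector [1, 1], vector [0, 1]}"
      by auto
  qed (auto simp: unit_corners_def forall_2)
  show ?thesis
    unfolding corners by (simp add: frame_map_def)
qed

lemma unit_square_eq_convex_hull: "unit_square = convex hull unit_corners"
  unfolding unit_square_def unit_corners_def Cart_1 unit_interval_convex_hull[where 'a="real^2"]
    box_real[symmetric]
  by (rule arg_cong[where f="\<lambda>x. convex hull x"]) (simp add: Basis_vec_def inner_axis)

lemma para_box_eq_convex_hull:
  assumes "cross2 u v \<noteq> 0"
  shows "para_box a u v = convex hull {a, a + u, a + u + v, a + v}"
  unfolding frame_map_unit_square[OF assms, symmetric] unit_square_eq_convex_hull
    frame_map_convex_hull frame_map_unit_corners ..

lemma convex_para_box: "cross2 u v \<noteq> 0 \<Longrightarrow> convex (para_box a u v)"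
  by (simp add: para_box_eq_convex_hull)

lemma interior_para_box:
  assumes "cross2 u v \<noteq> 0"
  shows "interior (para_box a u v) = para_open a u v"
  unfolding frame_map_unit_square[OF assms, symmetric] interior_frame_map_image[OF assms]
    unit_square_def
  by (simp add: frame_map_open_unit_square[OF assms])

lemma para_open_nonempty:
  assumes "cross2 u v \<noteq> 0"
  shows "a + (1/2) *\<^sub>R u + (1/2) *\<^sub>R v \<in> para_open a u v"
  by (simp add: para_open_def coord_frame_map[OF assms])

lemma rel_interior_para_box:
  assumes "cross2 u v \<noteq> 0"
  shows "rel_interior (para_box a u v) = para_open a u v"
  using rel_interior_nonempty_interior[of "para_box a u v"] interior_para_box[OF assms]
    para_open_nonempty[OF assms] by auto

lemma aff_dim_para_box:
  assumes "cross2 u v \<noteq> 0"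
  shows "aff_dim (para_box a u v) = 2"
  using aff_dim_nonempty_interior[of "para_box a u v"] interior_para_box[OF assms]
    para_open_nonempty[OF assms] by auto

lemma extreme_point_of_para_box:
  assumes "cross2 u v \<noteq> 0" "q extreme_point_of para_box a u v"
  shows "q \<in> frame_map a u v ` unit_corners"
  using assms(2) extreme_point_of_convex_hull
  unfolding frame_map_unit_square[OF assms(1), symmetric] unit_square_eq_convex_hull
    frame_map_convex_hull
  by blast

lemma parallelogram_eq_para_box:
  assumes "parallelogram P"
  obtains a u v where "cross2 u v \<noteq> 0" "P = para_box a u v"
proof -
  obtain a u v where "u$1 * v$2 - u$2 * v$1 \<noteq> 0"
    and P: "P = convex hull {a, a + u, a + u + v, a + v}"
    using assms unfolding parallelogram_def by blast
  then have uv: "cross2 u v \<noteq> 0"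
    by (simp add: cross2_def)
  show thesis
    using that[OF uv] P para_box_eq_convex_hull[OF uv] by simp
qed

section \<open>The sides of a parallelogram\<close>

lemma coord_reparam:
  assumes "cross2 u v \<noteq> 0"
  shows "coord_u (a + u) (-u) v x = 1 - coord_u a u v x"
    "coord_v (a + u) (-u) v x = coord_v a u v x"
    and "coord_u a v u x = coord_v a u v x" "coord_v a v u x = coord_u a u v x"
    and "coord_u (a + v) (-v) u x = 1 - coord_v a u v x"
    "coord_v (a + v) (-v) u x = coord_u a u v x"
  using assms by (simp_all add: coord_u_def coord_v_def cross2_def field_simps)

lemma para_box_reparam:
  assumes "cross2 u v \<noteq> 0"
  shows "para_box (a + u) (-u) v = para_box a u v" "para_box a v u = para_box a u v"
    "para_box (a + v) (-v) u = para_box a u v"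
  by (auto simp: para_box_def coord_reparam[OF assms])

lemma convex_coord_u_level: "convex {x. coord_u a u v x = c}"
  unfolding convex_def by (simp add: coord_convex_comb flip: distrib_right)

lemma face_of_para_box_side:
  assumes "cross2 u v \<noteq> 0"
  shows "{x \<in> para_box a u v. coord_u a u v x = 0} face_of para_box a u v"
  unfolding face_of_def
proof (intro conjI ballI impI)
  show "convex {x \<in> para_box a u v. coord_u a u v x = 0}"
    using convex_Int[OF convex_para_box[OF assms] convex_coord_u_level] by (simp add: Int_def)
  fix x y z
  assume xy: "x \<in> para_box a u v" "y \<in> para_box a u v"
    and z: "z \<in> {x \<in> para_box a u v. coord_u a u v x = 0}" "z \<in> open_segment x y"
  obtain m where m: "0 < m" "m < 1" "z = (1 - m) *\<^sub>R x + m *\<^sub>R y"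
    using z(2) by (auto simp: in_segment)
  then have "(1 - m) * coord_u a u v x + m * coord_u a u v y = 0"
    using z(1) coord_convex_comb(1)[of "1 - m" m] by simp
  moreover have "0 \<le> coord_u a u v x" "0 \<le> coord_u a u v y"
    using xy by (auto simp: para_box_def)
  ultimately have "coord_u a u v x = 0 \<and> coord_u a u v y = 0"
    using m by (smt (verit) mult_pos_pos mult_nonneg_nonneg)
  then show "x \<in> {x \<in> para_box a u v. coord_u a u v x = 0}"
    "y \<in> {x \<in> para_box a u v. coord_u a u v x = 0}"
    using xy by auto
qed auto

lemma para_box_side_eq_segment:
  assumes "cross2 u v \<noteq> 0"
  shows "{x \<in> para_box a u v. coord_u a u v x = 0} = closed_segment a (a + v)"
proof -
  have seg: "closed_segment a (a + v) = {a + t *\<^sub>R v |t. 0 \<le> t \<and> t \<le> 1}"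
    by (auto simp: closed_segment_def algebra_simps)
  show ?thesis
  proof (intro set_eqI iffI)
    fix x assume x: "x \<in> {x \<in> para_box a u v. coord_u a u v x = 0}"
    then have "x = a + coord_v a u v x *\<^sub>R v"
      using frame_map_coords[OF assms, of a x] by simp
    then show "x \<in> closed_segment a (a + v)"
      unfolding seg using x by (auto simp: para_box_def)
  next
    fix x assume "x \<in> closed_segment a (a + v)"
    then obtain t where "0 \<le> t" "t \<le> 1" "x = a + t *\<^sub>R v"
      unfolding seg by auto
    then show "x \<in> {x \<in> para_box a u v. coord_u a u v x = 0}"
      using coord_frame_map[OF assms, of a 0 t] by (simp add: para_box_def)
  qed
qed

lemma para_box_side_facet:
  assumes "cross2 u v \<noteq> 0"
  shows "closed_segment a (a + v) facet_of para_box a u v"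
proof -
  have "v \<noteq> 0"
    using assms by (auto simp: cross2_def)
  then have "aff_dim (closed_segment a (a + v)) = 1"
    by (simp add: segment_convex_hull aff_dim_convex_hull)
  then show ?thesis
    using face_of_para_box_side[OF assms, of a] aff_dim_para_box[OF assms]
    by (simp add: facet_of_def para_box_side_eq_segment[OF assms])
qed

lemma rel_interior_para_box_side:
  assumes "cross2 u v \<noteq> 0" "x \<in> rel_interior (closed_segment a (a + v))"
  shows "coord_u a u v x = 0 \<and> 0 < coord_v a u v x \<and> coord_v a u v x < 1"
proof -
  have "v \<noteq> 0"
    using assms by (auto simp: cross2_def)
  then obtain t where "0 < t" "t < 1" "x = a + t *\<^sub>R v"
    using assms(2) by (auto simp: rel_interior_closed_segment in_segment algebra_simps)
  then show ?thesis
    using coord_frame_map[OF assms(1), of a 0 t] by simp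
qed

lemma exists_point_on_side:
  assumes "cross2 u v \<noteq> 0" "\<And>F. F facet_of para_box a u v \<Longrightarrow> \<exists>q\<in>S. q \<in> rel_interior F"
  shows "\<exists>q\<in>S. coord_u a u v q = 0 \<and> coord_v a u v q \<in> {0<..<1}"
proof -
  obtain q where "q \<in> S" "q \<in> rel_interior (closed_segment a (a + v))"
    using assms(2)[OF para_box_side_facet[OF assms(1)]] by blast
  then show ?thesis
    using rel_interior_para_box_side[OF assms(1)] by auto
qed

definition touches_sides ::
    "real^2 \<Rightarrow> real^2 \<Rightarrow> real^2 \<Rightarrow> real^2 \<Rightarrow> real^2 \<Rightarrow> real^2 \<Rightarrow> real^2 \<Rightarrow> bool" where
  "touches_sides a u v q1 q2 q3 q4 \<longleftrightarrow>
     coord_u a u v q1 = 0 \<and> coord_v a u v q1 \<in> {0<..<1} \<and>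
     coord_v a u v q2 = 0 \<and> coord_u a u v q2 \<in> {0<..<1} \<and>
     coord_u a u v q3 = 1 \<and> coord_v a u v q3 \<in> {0<..<1} \<and>
     coord_v a u v q4 = 1 \<and> coord_u a u v q4 \<in> {0<..<1}"

lemma touches_sides_reparam:
  assumes "cross2 u v \<noteq> 0"
  shows "touches_sides (a + u) (-u) v q3 q2 q1 q4 \<longleftrightarrow> touches_sides a u v q1 q2 q3 q4"
    "touches_sides a v u q2 q1 q4 q3 \<longleftrightarrow> touches_sides a u v q1 q2 q3 q4"
    "touches_sides (a + v) (-v) u q4 q1 q2 q3 \<longleftrightarrow> touches_sides a u v q1 q2 q3 q4"
  by (auto simp: touches_sides_def coord_reparam[OF assms])

lemma touches_sides_distinct:
  assumes "touches_sides a u v q1 q2 q3 q4"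
  shows "distinct [q1, q2, q3, q4]"
proof -
  have "coord_u a u v q1 = 0" "0 < coord_v a u v q1" "coord_v a u v q1 < 1"
    "coord_v a u v q2 = 0" "0 < coord_u a u v q2" "coord_u a u v q2 < 1"
    "coord_u a u v q3 = 1" "0 < coord_v a u v q3" "coord_v a u v q3 < 1"
    "coord_v a u v q4 = 1" "0 < coord_u a u v q4" "coord_u a u v q4 < 1"
    using assms unfolding touches_sides_def greaterThanLessThan_iff by blast+
  then have "q1 \<noteq> q2 \<and> q1 \<noteq> q3 \<and> q1 \<noteq> q4 \<and> q2 \<noteq> q3 \<and> q2 \<noteq> q4 \<and> q3 \<noteq> q4"
    by (metis less_irrefl zero_neq_one)
  then show ?thesis by simp
qed

lemma exists_touches_sides:
  assumes uv: "cross2 u v \<noteq> 0"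
    and facets: "\<And>F. F facet_of para_box a u v \<Longrightarrow> \<exists>q\<in>S. q \<in> rel_interior F"
  shows "\<exists>q1\<in>S. \<exists>q2\<in>S. \<exists>q3\<in>S. \<exists>q4\<in>S. touches_sides a u v q1 q2 q3 q4"
proof -
  note coords = coord_reparam[OF uv] and boxes = para_box_reparam[OF uv]
  have uv': "cross2 (-u) v \<noteq> 0" "cross2 v u \<noteq> 0" "cross2 (-v) u \<noteq> 0"
    using uv by (auto simp: cross2_def algebra_simps)
  obtain q1 where "q1 \<in> S" "coord_u a u v q1 = 0" "coord_v a u v q1 \<in> {0<..<1}"
    using exists_point_on_side[OF uv facets] by blast
  moreover obtain q3 where "q3 \<in> S" "coord_u a u v q3 = 1" "coord_v a u v q3 \<in> {0<..<1}"
  proof -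
    obtain q where "q \<in> S" "coord_u (a + u) (-u) v q = 0" "coord_v (a + u) (-u) v q \<in> {0<..<1}"
      using exists_point_on_side[OF uv'(1), of "a + u" S] facets unfolding boxes(1) by blast
    then show thesis
      using that[of q] unfolding coords(1,2) by simp
  qed
  moreover obtain q2 where "q2 \<in> S" "coord_v a u v q2 = 0" "coord_u a u v q2 \<in> {0<..<1}"
  proof -
    obtain q where "q \<in> S" "coord_u a v u q = 0" "coord_v a v u q \<in> {0<..<1}"
      using exists_point_on_side[OF uv'(2), of a S] facets unfolding boxes(2) by blast
    then show thesis
      using that[of q] unfolding coords(3,4) by simp
  qed
  moreover obtain q4 where "q4 \<in> S" "coord_v a u v q4 = 1" "coord_u a u v q4 \<in> {0<..<1}"
  proof -
    obtain q where "q \<in> S" "coord_u (a + v) (-v) u q = 0" "coord_v (a + v) (-v) u q \<in> {0<..<1}"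
      using exists_point_on_side[OF uv'(3), of "a + v" S] facets unfolding boxes(3) by blast
    then show thesis
      using that[of q] unfolding coords(5,6) by simp
  qed
  ultimately show ?thesis
    unfolding touches_sides_def by blast
qed

section \<open>Lattice vectors and unimodular triangles\<close>

definition lattice_vec :: "real^2 \<Rightarrow> bool" where
  "lattice_vec e \<longleftrightarrow> e$1 \<in> \<int> \<and> e$2 \<in> \<int>"

definition unimodular_basis :: "real^2 \<Rightarrow> real^2 \<Rightarrow> bool" where
  "unimodular_basis c1 c2 \<longleftrightarrow> lattice_vec c1 \<and> lattice_vec c2 \<and> \<bar>cross2 c1 c2\<bar> = 1"

lemma lattice_vec_comb:
  assumes "lattice_vec c1" "lattice_vec c2" "p \<in> \<int>" "q \<in> \<int>"
  shows "lattice_vec (p *\<^sub>R c1 + q *\<^sub>R c2)"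
  using assms by (simp add: lattice_vec_def)

lemma lattice_vec_diff: "lattice_vec x \<Longrightarrow> lattice_vec y \<Longrightarrow> lattice_vec (x - y)"
  by (simp add: lattice_vec_def)

lemma cross2_comb:
  "cross2 (p1 *\<^sub>R c1 + r1 *\<^sub>R c2) (p2 *\<^sub>R c1 + r2 *\<^sub>R c2) = (p1 * r2 - p2 * r1) * cross2 c1 c2"
  by (simp add: cross2_def algebra_simps)

lemma R_unimodular_map_iff:
  "R_unimodular_map T \<longleftrightarrow> (\<exists>b c1 c2. unimodular_basis c1 c2 \<and> T = frame_map b c1 c2)"
proof
  assume "R_unimodular_map T"
  then obtain M :: "real^2^2" and b where M: "\<forall>i j. M$i$j \<in> \<int>" "\<bar>det M\<bar> = 1"
    and T: "T = (\<lambda>x. M *v x + b)"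
    unfolding R_unimodular_map_def by blast
  define c1 c2 :: "real^2" where "c1 = (\<chi> i. M$i$1)" and "c2 = (\<chi> i. M$i$2)"
  have "unimodular_basis c1 c2"
    using M by (simp add: unimodular_basis_def lattice_vec_def cross2_def c1_def c2_def det_2
        mult.commute)
  moreover have "T = frame_map b c1 c2"
    by (auto simp: T frame_map_def c1_def c2_def matrix_vector_mult_def sum_2 vec_eq_iff forall_2
        algebra_simps)
  ultimately show "\<exists>b c1 c2. unimodular_basis c1 c2 \<and> T = frame_map b c1 c2" by blast
next
  assume "\<exists>b c1 c2. unimodular_basis c1 c2 \<and> T = frame_map b c1 c2"
  then obtain b c1 c2 where c: "unimodular_basis c1 c2" and T: "T = frame_map b c1 c2" by blast
  define M :: "real^2^2" where "M = (\<chi> i j. if j = 1 then c1$i else c2$i)"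
  have "\<forall>i j. M$i$j \<in> \<int>"
    using c by (auto simp: M_def unimodular_basis_def lattice_vec_def forall_2)
  moreover have "\<bar>det M\<bar> = 1"
    using c by (simp add: M_def det_2 unimodular_basis_def cross2_def mult.commute)
  moreover have "T = (\<lambda>x. M *v x + b)"
    by (auto simp: T frame_map_def M_def matrix_vector_mult_def sum_2 vec_eq_iff forall_2
        algebra_simps)
  ultimately show "R_unimodular_map T"
    unfolding R_unimodular_map_def by blast
qed

lemma R_unimodular_image_unit_square:
  assumes "R_unimodular_map T"
  obtains b c1 c2 where "unimodular_basis c1 c2" "T ` unit_square = para_box b c1 c2"
proof -
  obtain b c1 c2 where c: "unimodular_basis c1 c2" and T: "T = frame_map b c1 c2"
    using assms unfolding R_unimodular_map_iff by blast
  then have "cross2 c1 c2 \<noteq> 0"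
    by (auto simp: unimodular_basis_def)
  then show thesis
    using that[OF c] T frame_map_unit_square by simp
qed

lemma frame_map_Delta2: "frame_map b c1 c2 ` Delta2 = convex hull {b, b + c1, b + c2}"
  unfolding Delta2_def frame_map_convex_hull by (simp add: frame_map_def axis_def)

lemma lattice_coords:
  assumes "unimodular_basis c1 c2" "lattice_vec e"
  shows "coord_u 0 c1 c2 e \<in> \<int>" "coord_v 0 c1 c2 e \<in> \<int>"
proof -
  have d: "cross2 c1 c2 = 1 \<or> cross2 c1 c2 = -1"
    using assms(1) unfolding unimodular_basis_def by linarith
  have "cross2 e c2 \<in> \<int>" "cross2 c1 e \<in> \<int>"
    using assms unfolding unimodular_basis_def lattice_vec_def cross2_def
    by (auto intro!: Ints_diff Ints_mult)
  then show "coord_u 0 c1 c2 e \<in> \<int>" "coord_v 0 c1 c2 e \<in> \<int>"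
    using d by (auto simp: coord_u_def coord_v_def)
qed

lemma exists_edge_off_axes:
  assumes "cross2 c1 c2 \<noteq> 0" "cross2 e1 e2 \<noteq> 0"
  shows "\<exists>e\<in>{e1, e2, e2 - e1}. coord_u 0 c1 c2 e \<noteq> 0 \<and> coord_v 0 c1 c2 e \<noteq> 0"
proof (rule ccontr)
  define p1 where "p1 = coord_u 0 c1 c2 e1"
  define r1 where "r1 = coord_v 0 c1 c2 e1"
  define p2 where "p2 = coord_u 0 c1 c2 e2"
  define r2 where "r2 = coord_v 0 c1 c2 e2"
  have e: "e1 = p1 *\<^sub>R c1 + r1 *\<^sub>R c2" "e2 = p2 *\<^sub>R c1 + r2 *\<^sub>R c2"
    using frame_map_coords[OF assms(1), of 0] by (simp_all add: p1_def r1_def p2_def r2_def)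
  have "coord_u 0 c1 c2 (e2 - e1) = p2 - p1" "coord_v 0 c1 c2 (e2 - e1) = r2 - r1"
    by (simp_all add: p1_def r1_def p2_def r2_def linear_diff linear_coord_u linear_coord_v)
  moreover assume "\<not> (\<exists>e\<in>{e1, e2, e2 - e1}. coord_u 0 c1 c2 e \<noteq> 0 \<and> coord_v 0 c1 c2 e \<noteq> 0)"
  ultimately have "p1 * r1 = 0" "p2 * r2 = 0" "(p2 - p1) * (r2 - r1) = 0"
    by (auto simp: p1_def r1_def p2_def r2_def)
  then have "p1 * r2 - p2 * r1 = 0"
    by auto
  then show False
    using assms(2) by (simp add: e cross2_comb)
qed

lemma square_corners_unimodular:
  fixes s1 t1 s2 t2 s3 t3 :: real
  assumes "s1 \<in> {0, 1}" "t1 \<in> {0, 1}" "s2 \<in> {0, 1}" "t2 \<in> {0, 1}" "s3 \<in> {0, 1}" "t3 \<in> {0, 1}"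
    and "(s1, t1) \<noteq> (s2, t2)" "(s1, t1) \<noteq> (s3, t3)" "(s2, t2) \<noteq> (s3, t3)"
  shows "\<bar>(s1 - s2) * (t3 - t2) - (s3 - s2) * (t1 - t2)\<bar> = 1"
  using assms by auto

lemma R_Delta2_copy:
  assumes "R_unimodular_map T"
  obtains c e1 e2 where "unimodular_basis e1 e2" "T ` Delta2 = convex hull {c, c + e1, c + e2}"
  using assms frame_map_Delta2 unfolding R_unimodular_map_iff by blast

lemma R_Delta2_copy_of_corners:
  assumes c: "unimodular_basis c1 c2"
    and p: "{p1, p2, p3} \<subseteq> frame_map b c1 c2 ` unit_corners" "distinct [p1, p2, p3]"
  shows "\<exists>T. R_unimodular_map T \<and> T ` Delta2 = convex hull {p1 + t, p2 + t, p3 + t}"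
proof -
  obtain y1 y2 y3 :: "real^2" where y: "\<forall>i. y1$i = 0 \<or> y1$i = 1" "\<forall>i. y2$i = 0 \<or> y2$i = 1"
    "\<forall>i. y3$i = 0 \<or> y3$i = 1"
    and py: "p1 = frame_map b c1 c2 y1" "p2 = frame_map b c1 c2 y2" "p3 = frame_map b c1 c2 y3"
    using p(1) unfolding unit_corners_def by auto
  have diff: "frame_map b c1 c2 y - frame_map b c1 c2 z = (y$1 - z$1) *\<^sub>R c1 + (y$2 - z$2) *\<^sub>R c2"
    for y z
    by (simp add: frame_map_def algebra_simps)
  have ne: "(y$1, y$2) \<noteq> (z$1, z$2)" if "frame_map b c1 c2 y \<noteq> frame_map b c1 c2 z" for y z
  proof
    assume "(y$1, y$2) = (z$1, z$2)"
    then have "y = z"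
      by (simp add: vec_eq_iff forall_2)
    with that show False
      by simp
  qed
  define e1 e2 where "e1 = p1 - p2" and "e2 = p3 - p2"
  have "y$i \<in> \<int>" if "\<forall>i. y$i = 0 \<or> y$i = 1" for y :: "real^2" and i
    using that by (metis Ints_0 Ints_1)
  then have "lattice_vec e1" "lattice_vec e2"
    using c y unfolding e1_def e2_def py diff unimodular_basis_def
    by (auto intro!: lattice_vec_comb Ints_diff)
  moreover have "\<bar>cross2 e1 e2\<bar> = 1"
  proof -
    have "\<bar>(y1$1 - y2$1) * (y3$2 - y2$2) - (y3$1 - y2$1) * (y1$2 - y2$2)\<bar> = 1"
      by (rule square_corners_unimodular) (use y p(2) ne in \<open>auto simp: py\<close>)
    then show ?thesis
      using c by (simp add: e1_def e2_def py diff cross2_comb abs_mult unimodular_basis_def)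
  qed
  ultimately have "R_unimodular_map (frame_map (p2 + t) e1 e2)"
    unfolding R_unimodular_map_iff unimodular_basis_def by blast
  moreover have "{p2 + t, p2 + t + e1, p2 + t + e2} = {p1 + t, p2 + t, p3 + t}"
    by (auto simp: e1_def e2_def algebra_simps)
  ultimately show ?thesis
    using frame_map_Delta2 by metis
qed

lemma R_Delta2_free_no_copy_in_interior:
  assumes "R_Delta2_free L" "R_unimodular_map T" "T ` Delta2 = convex hull S" "S \<subseteq> interior L"
  shows False
proof -
  have "convex hull S \<subseteq> interior L"
    using assms(1,4) by (simp add: R_Delta2_free_def convex_interior hull_minimal)
  then show False
    using assms(1-3) interior_subset_rel_interior unfolding R_Delta2_free_def by blast
qed

section \<open>Freeness\<close>

definition skew_lattice_wide :: "real^2 \<Rightarrow> real^2 \<Rightarrow> real^2 \<Rightarrow> real^2 \<Rightarrow> bool" where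
  "skew_lattice_wide u v c1 c2 \<longleftrightarrow>
     (\<forall>e. lattice_vec e \<and> coord_u 0 c1 c2 e \<noteq> 0 \<and> coord_v 0 c1 c2 e \<noteq> 0 \<longrightarrow>
       1 \<le> \<bar>coord_u 0 u v e\<bar> \<or> 1 \<le> \<bar>coord_v 0 u v e\<bar>)"

lemma para_open_coord_diff:
  assumes "x \<in> para_open a u v" "x + e \<in> para_open a u v"
  shows "\<bar>coord_u 0 u v e\<bar> < 1 \<and> \<bar>coord_v 0 u v e\<bar> < 1"
  using assms by (auto simp: para_open_def coord_add)

lemma para_box_R_Delta2_free:
  assumes uv: "cross2 u v \<noteq> 0" and c: "cross2 c1 c2 \<noteq> 0" and wide: "skew_lattice_wide u v c1 c2"
  shows "R_Delta2_free (para_box a u v)"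
  unfolding R_Delta2_free_def
proof (intro conjI notI)
  show "convex (para_box a u v)"
    by (rule convex_para_box[OF uv])
  assume "\<exists>T. R_unimodular_map T \<and> T ` Delta2 \<subseteq> rel_interior (para_box a u v)"
  then obtain T where "R_unimodular_map T" "T ` Delta2 \<subseteq> para_open a u v"
    unfolding rel_interior_para_box[OF uv] by blast
  then obtain c e1 e2 where e: "unimodular_basis e1 e2"
    and sub: "convex hull {c, c + e1, c + e2} \<subseteq> para_open a u v"
    by (metis R_Delta2_copy)
  have in_open: "c \<in> para_open a u v" "c + e1 \<in> para_open a u v" "c + e2 \<in> para_open a u v"
    using order_trans[OF hull_subset sub] by simp_all
  have "cross2 e1 e2 \<noteq> 0"
    using e by (auto simp: unimodular_basis_def)
  then obtain d where d: "d \<in> {e1, e2, e2 - e1}" "coord_u 0 c1 c2 d \<noteq> 0" "coord_v 0 c1 c2 d \<noteq> 0"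
    using exists_edge_off_axes[OF c] by blast
  define x where "x = (if d = e2 - e1 then c + e1 else c)"
  have "x \<in> para_open a u v" "x + d \<in> para_open a u v" "lattice_vec d"
    using d(1) in_open e by (auto simp: x_def unimodular_basis_def lattice_vec_diff)
  then show False
    using wide d(2,3) para_open_coord_diff unfolding skew_lattice_wide_def by fastforce
qed

definition same_sign_wide :: "real \<Rightarrow> real \<Rightarrow> bool" where
  "same_sign_wide \<alpha> \<beta> \<longleftrightarrow> (0 \<le> \<alpha> \<and> 0 \<le> \<beta> \<and> 1 \<le> \<alpha> + \<beta>) \<or> (\<alpha> \<le> 0 \<and> \<beta> \<le> 0 \<and> \<alpha> + \<beta> \<le> -1)"

lemma same_sign_wide_lattice:
  assumes "same_sign_wide \<alpha> \<beta>" "p \<in> \<int>" "q \<in> \<int>" "0 < p * q"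
  shows "1 \<le> \<bar>\<alpha> * p + \<beta> * q\<bar>"
proof -
  have key: "1 \<le> a * x + b * y" if "0 \<le> a" "0 \<le> b" "1 \<le> a + b" "1 \<le> x" "1 \<le> y" for a b x y :: real
  proof -
    have "a \<le> a * x" "b \<le> b * y"
      using that mult_left_mono[of 1 x a] mult_left_mono[of 1 y b] by auto
    then show ?thesis
      using that by linarith
  qed
  have "p \<noteq> 0" "q \<noteq> 0" "0 < p \<longleftrightarrow> 0 < q"
    using assms(4) by (auto simp: zero_less_mult_iff)
  then have "1 \<le> p \<and> 1 \<le> q \<or> 1 \<le> -p \<and> 1 \<le> -q"
    using assms(2,3) by (auto elim!: Ints_cases)
  then show ?thesis
    using assms(1) key[of \<alpha> \<beta> p q] key[of \<alpha> \<beta> "-p" "-q"] key[of "-\<alpha>" "-\<beta>" p q]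
      key[of "-\<alpha>" "-\<beta>" "-p" "-q"]
    unfolding same_sign_wide_def by auto
qed

text \<open>The touching vertices on opposite sides are opposite corners of the square; the lemma
  is checked over all choices of corners.\<close>

lemma corner_values_same_sign_wide:
  fixes f0 \<alpha> \<beta> g0 \<gamma> \<delta> s1 t1 s2 t2 s3 t3 s4 t4 :: real
  assumes "s1 = 0 \<or> s1 = 1" "t1 = 0 \<or> t1 = 1" "s2 = 0 \<or> s2 = 1" "t2 = 0 \<or> t2 = 1"
    "s3 = 0 \<or> s3 = 1" "t3 = 0 \<or> t3 = 1" "s4 = 0 \<or> s4 = 1" "t4 = 0 \<or> t4 = 1"
    and "f0 + \<alpha> * s1 + \<beta> * t1 = 0" "0 < g0 + \<gamma> * s1 + \<delta> * t1" "g0 + \<gamma> * s1 + \<delta> * t1 < 1"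
    and "g0 + \<gamma> * s2 + \<delta> * t2 = 0" "0 < f0 + \<alpha> * s2 + \<beta> * t2" "f0 + \<alpha> * s2 + \<beta> * t2 < 1"
    and "f0 + \<alpha> * s3 + \<beta> * t3 = 1" "0 < g0 + \<gamma> * s3 + \<delta> * t3" "g0 + \<gamma> * s3 + \<delta> * t3 < 1"
    and "g0 + \<gamma> * s4 + \<delta> * t4 = 1" "0 < f0 + \<alpha> * s4 + \<beta> * t4" "f0 + \<alpha> * s4 + \<beta> * t4 < 1"
  shows "same_sign_wide \<alpha> \<beta> \<and> same_sign_wide \<gamma> (-\<delta>) \<or> same_sign_wide \<gamma> \<delta> \<and> same_sign_wide \<alpha> (-\<beta>)"
  using assms unfolding same_sign_wide_def by (elim disjE) simp_all

lemma coord_frame_map_image: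
  "coord_u a u v (frame_map b c1 c2 y)
     = coord_u a u v b + coord_u 0 u v c1 * y$1 + coord_u 0 u v c2 * y$2"
  "coord_v a u v (frame_map b c1 c2 y)
     = coord_v a u v b + coord_v 0 u v c1 * y$1 + coord_v 0 u v c2 * y$2"
  by (simp_all add: frame_map_def add.assoc coord_add linear_add linear_scale linear_coord_u
      linear_coord_v mult.commute)

lemma touching_square_same_sign_wide:
  assumes touch: "touches_sides a u v q1 q2 q3 q4"
    and corners: "{q1, q2, q3, q4} \<subseteq> frame_map b c1 c2 ` unit_corners"
  shows "same_sign_wide (coord_u 0 u v c1) (coord_u 0 u v c2) \<and>
      same_sign_wide (coord_v 0 u v c1) (- coord_v 0 u v c2) \<or>
    same_sign_wide (coord_v 0 u v c1) (coord_v 0 u v c2) \<and>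
      same_sign_wide (coord_u 0 u v c1) (- coord_u 0 u v c2)"
proof -
  obtain y1 y2 y3 y4 :: "real^2" where y: "\<forall>i. y1$i = 0 \<or> y1$i = 1" "\<forall>i. y2$i = 0 \<or> y2$i = 1"
    "\<forall>i. y3$i = 0 \<or> y3$i = 1" "\<forall>i. y4$i = 0 \<or> y4$i = 1"
    and q: "q1 = frame_map b c1 c2 y1" "q2 = frame_map b c1 c2 y2" "q3 = frame_map b c1 c2 y3"
      "q4 = frame_map b c1 c2 y4"
    using corners unfolding unit_corners_def by auto
  show ?thesis
    by (rule corner_values_same_sign_wide[of "y1$1" "y1$2" "y2$1" "y2$2" "y3$1" "y3$2" "y4$1" "y4$2"
          "coord_u a u v b" _ _ "coord_v a u v b"])
      (use y touch in \<open>auto simp: q touches_sides_def coord_frame_map_image\<close>)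
qed

lemma touching_square_skew_lattice_wide:
  assumes c: "unimodular_basis c1 c2"
    and touch: "touches_sides a u v q1 q2 q3 q4"
    and corners: "{q1, q2, q3, q4} \<subseteq> frame_map b c1 c2 ` unit_corners"
  shows "skew_lattice_wide u v c1 c2"
  unfolding skew_lattice_wide_def
proof (intro allI impI, elim conjE)
  fix e assume e: "lattice_vec e" "coord_u 0 c1 c2 e \<noteq> 0" "coord_v 0 c1 c2 e \<noteq> 0"
  define \<alpha> \<beta> \<gamma> \<delta> where "\<alpha> = coord_u 0 u v c1" and "\<beta> = coord_u 0 u v c2"
    and "\<gamma> = coord_v 0 u v c1" and "\<delta> = coord_v 0 u v c2"
  have wide: "same_sign_wide \<alpha> \<beta> \<and> same_sign_wide \<gamma> (-\<delta>) \<or>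
      same_sign_wide \<gamma> \<delta> \<and> same_sign_wide \<alpha> (-\<beta>)"
    unfolding \<alpha>_def \<beta>_def \<gamma>_def \<delta>_def by (rule touching_square_same_sign_wide[OF touch corners])
  define p q where "p = coord_u 0 c1 c2 e" and "q = coord_v 0 c1 c2 e"
  have pq: "p \<in> \<int>" "q \<in> \<int>" "-q \<in> \<int>" "p * q \<noteq> 0"
    using lattice_coords[OF c e(1)] e(2,3) by (simp_all add: p_def q_def)
  have "cross2 c1 c2 \<noteq> 0"
    using c by (auto simp: unimodular_basis_def)
  then have "e = frame_map 0 c1 c2 (vector [p, q])"
    using frame_map_coords[of c1 c2 0 e] by (simp add: frame_map_def p_def q_def)
  then have uv: "coord_u 0 u v e = \<alpha> * p + \<beta> * q" "coord_v 0 u v e = \<gamma> * p + \<delta> * q"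
    by (simp_all add: coord_frame_map_image \<alpha>_def \<beta>_def \<gamma>_def \<delta>_def mult.commute
        linear_0[OF linear_coord_u] linear_0[OF linear_coord_v])
  consider "0 < p * q" | "0 < p * (-q)"
    using pq(4) by (cases "0 < p * q") auto
  then show "1 \<le> \<bar>coord_u 0 u v e\<bar> \<or> 1 \<le> \<bar>coord_v 0 u v e\<bar>"
  proof cases
    case 1
    then show ?thesis
      unfolding uv using wide same_sign_wide_lattice[OF _ pq(1,2)] by blast
  next
    case 2
    then show ?thesis
      unfolding uv using wide same_sign_wide_lattice[OF _ pq(1,3)] by fastforce
  qed
qed

section \<open>Maximality\<close>

lemma beyond_side_convex_comb:
  assumes uv: "cross2 u v \<noteq> 0" and k: "k * coord_u a u v x = -2" and l: "l = k * e" "l \<noteq> 1"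
  shows "(1 - l) *\<^sub>R (a + (e / (1 - l)) *\<^sub>R u + ((t0 + e - l * coord_v a u v x) / (1 - l)) *\<^sub>R v)
      + l *\<^sub>R x = a + (-e) *\<^sub>R u + (t0 + e) *\<^sub>R v"
    (is "(1 - l) *\<^sub>R ?p + l *\<^sub>R x = ?w")
proof (rule coord_eqI[OF uv])
  have "coord_u a u v ((1 - l) *\<^sub>R ?p + l *\<^sub>R x) = (1 - l) * (e / (1 - l)) + l * coord_u a u v x"
    using coord_convex_comb(1)[of "1 - l" l] by (simp add: coord_frame_map[OF uv])
  also have "\<dots> = e + e * (k * coord_u a u v x)"
    using l by (simp add: mult_ac)
  finally show "coord_u a u v ((1 - l) *\<^sub>R ?p + l *\<^sub>R x) = coord_u a u v ?w"
    using k coord_frame_map[OF uv, of a "-e" "t0 + e"] by simp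
  have "coord_v a u v ((1 - l) *\<^sub>R ?p + l *\<^sub>R x)
      = (1 - l) * ((t0 + e - l * coord_v a u v x) / (1 - l)) + l * coord_v a u v x"
    using coord_convex_comb(2)[of "1 - l" l] by (simp add: coord_frame_map[OF uv])
  also have "\<dots> = t0 + e"
    using l by simp
  finally show "coord_v a u v ((1 - l) *\<^sub>R ?p + l *\<^sub>R x) = coord_v a u v ?w"
    using coord_frame_map[OF uv, of a "-e" "t0 + e"] by simp
qed

lemma eventually_beyond_side_in_interior:
  assumes uv: "cross2 u v \<noteq> 0" and L: "convex L" "para_box a u v \<subseteq> L"
    and x: "x \<in> L" "coord_u a u v x < 0" and t0: "0 < t0" "t0 < 1"
  shows "\<forall>\<^sub>F e in at_right 0. a + (-e) *\<^sub>R u + (t0 + e) *\<^sub>R v \<in> interior L"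
proof -
  \<comment> \<open>The point is \<open>(1 - k e) p + k e x\<close> with \<open>p\<close> in the open parallelogram; the choice of
    \<open>k\<close> makes the \<open>s\<close>-coordinate of \<open>p\<close> equal to \<open>e / (1 - k e)\<close>.\<close>
  define k where "k = -2 / coord_u a u v x"
  have k: "0 < k" "k * coord_u a u v x = -2"
    using x(2) by (simp_all add: k_def field_simps)
  define pv where "pv e = (t0 + e - k * e * coord_v a u v x) / (1 - k * e)" for e
  have lim: "((\<lambda>e. k * e) \<longlongrightarrow> 0) (at_right 0)" "((\<lambda>e. e / (1 - k * e)) \<longlongrightarrow> 0) (at_right 0)"
    "(pv \<longlongrightarrow> t0) (at_right 0)"
    unfolding pv_def by (auto intro!: tendsto_eq_intros)
  have "\<forall>\<^sub>F e in at_right 0. 0 < e \<and> k * e < 1 \<and> e / (1 - k * e) < 1 \<and> 0 < pv e \<and> pv e < 1"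
    using eventually_at_right_less[of 0] order_tendstoD(2)[OF lim(1) zero_less_one]
      order_tendstoD(2)[OF lim(2) zero_less_one] order_tendstoD(1)[OF lim(3) t0(1)]
      order_tendstoD(2)[OF lim(3) t0(2)]
    by eventually_elim auto
  then show ?thesis
  proof (rule eventually_mono)
    fix e assume e: "0 < e \<and> k * e < 1 \<and> e / (1 - k * e) < 1 \<and> 0 < pv e \<and> pv e < 1"
    define l where "l = k * e"
    have l: "0 < l" "l < 1"
      using e k by (simp_all add: l_def)
    define p where "p = a + (e / (1 - l)) *\<^sub>R u + pv e *\<^sub>R v"
    have p: "p \<in> para_open a u v"
      using e l by (simp add: p_def l_def para_open_def coord_frame_map[OF uv])
    then have "p \<noteq> x"
      using x(2) by (auto simp: para_open_def)
    then have "(1 - l) *\<^sub>R p + l *\<^sub>R x \<in> open_segment p x"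
      using l by (auto simp: in_segment)
    moreover have "p \<in> interior L"
      using p interior_mono[OF L(2)] interior_para_box[OF uv] by blast
    ultimately have "(1 - l) *\<^sub>R p + l *\<^sub>R x \<in> interior L"
      using in_interior_closure_convex_segment[OF L(1)] x(1) closure_subset by blast
    then show "a + (-e) *\<^sub>R u + (t0 + e) *\<^sub>R v \<in> interior L"
      using beyond_side_convex_comb[OF uv k(2) l_def, of t0] l by (simp add: p_def pv_def l_def)
  qed
qed

lemma eventually_less_at_right: "0 < c \<Longrightarrow> \<forall>\<^sub>F e in at_right 0. e < (c::real)"
  using order_tendstoD(2)[OF tendsto_ident_at] by blast

lemma translate_touching_into_interior:
  assumes uv: "cross2 u v \<noteq> 0" and L: "convex L" "para_box a u v \<subseteq> L"
    and x: "x \<in> L" "coord_u a u v x < 0" and touch: "touches_sides a u v q1 q2 q3 q4"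
  shows "\<exists>t. q1 + t \<in> interior L \<and> q2 + t \<in> interior L \<and> q3 + t \<in> interior L"
proof -
  have q: "coord_u a u v q1 = 0" "0 < coord_v a u v q1" "coord_v a u v q1 < 1"
    "coord_v a u v q2 = 0" "0 < coord_u a u v q2" "coord_u a u v q2 < 1"
    "coord_u a u v q3 = 1" "0 < coord_v a u v q3" "coord_v a u v q3 < 1"
    using touch unfolding touches_sides_def greaterThanLessThan_iff by blast+
  have "0 < 1 - coord_v a u v q3"
    using q(9) by simp
  let ?w = "\<lambda>e. a + (-e) *\<^sub>R u + (coord_v a u v q1 + e) *\<^sub>R v"
  have "\<forall>\<^sub>F e in at_right 0.
      ?w e \<in> interior L \<and> 0 < e \<and> e < coord_u a u v q2 \<and> e < 1 - coord_v a u v q3"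
    using eventually_beyond_side_in_interior[OF uv L x q(2,3)] eventually_at_right_less[of 0]
      eventually_less_at_right[OF q(5)] eventually_less_at_right[OF \<open>0 < 1 - coord_v a u v q3\<close>]
    by eventually_elim blast
  then obtain e where e: "?w e \<in> interior L" "0 < e" "e < coord_u a u v q2"
    "e < 1 - coord_v a u v q3"
    using eventually_happens'[of "at_right (0::real)"] by auto
  define w where "w = ?w e"
  have "coord_u a u v w = -e" "coord_v a u v w = coord_v a u v q1 + e"
    using coord_frame_map[OF uv, of a "-e" "coord_v a u v q1 + e"] by (simp_all add: w_def)
  then have t: "coord_u 0 u v (w - q1) = -e" "coord_v 0 u v (w - q1) = e"
    using q(1) by (simp_all add: coord_diff[where a = a])
  have "q2 + (w - q1) \<in> para_open a u v" "q3 + (w - q1) \<in> para_open a u v"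
    using q e t by (simp_all add: para_open_def coord_add)
  then have "q2 + (w - q1) \<in> interior L" "q3 + (w - q1) \<in> interior L"
    using interior_mono[OF L(2)] interior_para_box[OF uv] by blast+
  moreover have "w \<in> interior L"
    unfolding w_def by (rule e(1))
  ultimately show ?thesis
    by (intro exI[of _ "w - q1"]) simp
qed

lemma exists_translated_triple_in_interior:
  assumes uv: "cross2 u v \<noteq> 0" and L: "convex L" "para_box a u v \<subseteq> L"
    and x: "x \<in> L" "x \<notin> para_box a u v" and touch: "touches_sides a u v q1 q2 q3 q4"
  shows "\<exists>p1 p2 p3 t. {p1, p2, p3} \<subseteq> {q1, q2, q3, q4} \<and> distinct [p1, p2, p3] \<and>
    {p1 + t, p2 + t, p3 + t} \<subseteq> interior L"
proof -
  have uv': "cross2 (-u) v \<noteq> 0" "cross2 v u \<noteq> 0" "cross2 (-v) u \<noteq> 0"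
    using uv by (auto simp: cross2_def algebra_simps)
  have L': "para_box (a + u) (-u) v \<subseteq> L" "para_box a v u \<subseteq> L" "para_box (a + v) (-v) u \<subseteq> L"
    using L(2) by (simp_all add: para_box_reparam[OF uv])
  have touch': "touches_sides (a + u) (-u) v q3 q2 q1 q4" "touches_sides a v u q2 q1 q4 q3"
    "touches_sides (a + v) (-v) u q4 q1 q2 q3"
    using touch by (simp_all add: touches_sides_reparam[OF uv])
  have dist: "distinct [q1, q2, q3, q4]"
    by (rule touches_sides_distinct[OF touch])
  have triple: "\<exists>p1 p2 p3 t. {p1, p2, p3} \<subseteq> {q1, q2, q3, q4} \<and> distinct [p1, p2, p3] \<and>
      {p1 + t, p2 + t, p3 + t} \<subseteq> interior L"
    if "{p1, p2, p3} \<subseteq> {q1, q2, q3, q4}" "distinct [p1, p2, p3]"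
      "\<exists>t. p1 + t \<in> interior L \<and> p2 + t \<in> interior L \<and> p3 + t \<in> interior L" for p1 p2 p3
    using that by blast
  consider "coord_u a u v x < 0" | "coord_u (a + u) (-u) v x < 0" | "coord_u a v u x < 0"
    | "coord_u (a + v) (-v) u x < 0"
    using x(2) unfolding para_box_def coord_reparam[OF uv] by fastforce
  then show ?thesis
  proof cases
    case 1
    show ?thesis
      by (rule triple[of q1 q2 q3])
        (use dist translate_touching_into_interior[OF uv L x(1) 1 touch] in auto)
  next
    case 2
    show ?thesis
      by (rule triple[of q3 q2 q1])
        (use dist translate_touching_into_interior[OF uv'(1) L(1) L'(1) x(1) 2 touch'(1)] in auto)
  next
    case 3
    show ?thesis
      by (rule triple[of q2 q1 q4])
        (use dist translate_touching_into_interior[OF uv'(2) L(1) L'(2) x(1) 3 touch'(2)] in auto)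
  next
    case 4
    show ?thesis
      by (rule triple[of q4 q1 q2])
        (use dist translate_touching_into_interior[OF uv'(3) L(1) L'(3) x(1) 4 touch'(3)] in auto)
  qed
qed

lemma para_box_maximal:
  assumes uv: "cross2 u v \<noteq> 0" and c: "unimodular_basis c1 c2"
    and touch: "touches_sides a u v q1 q2 q3 q4"
    and corners: "{q1, q2, q3, q4} \<subseteq> frame_map b c1 c2 ` unit_corners"
    and L: "R_Delta2_free L" "para_box a u v \<subseteq> L"
  shows "L = para_box a u v"
proof (rule ccontr)
  assume "L \<noteq> para_box a u v"
  then obtain x where x: "x \<in> L" "x \<notin> para_box a u v"
    using L(2) by blast
  have "convex L"
    using L(1) by (simp add: R_Delta2_free_def)
  from exists_translated_triple_in_interior[OF uv this L(2) x touch]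
  obtain p1 p2 p3 t where p: "{p1, p2, p3} \<subseteq> {q1, q2, q3, q4}" "distinct [p1, p2, p3]"
    and int: "{p1 + t, p2 + t, p3 + t} \<subseteq> interior L"
    by blast
  have "{p1, p2, p3} \<subseteq> frame_map b c1 c2 ` unit_corners"
    using p(1) corners by (rule order_trans)
  from R_Delta2_copy_of_corners[OF c this p(2), of t]
  obtain T where "R_unimodular_map T" "T ` Delta2 = convex hull {p1 + t, p2 + t, p3 + t}"
    by blast
  then show False
    by (rule R_Delta2_free_no_copy_in_interior[OF L(1) _ _ int])
qed

theorem proposition5p9:
  fixes P Q :: "(real^2) set"
  assumes "\<exists>T. R_unimodular_map T \<and> Q = T ` unit_square"
    and "parallelogram P"
    and "\<forall>F. F facet_of P \<longrightarrow>
           card {q. q extreme_point_of Q \<and> q \<in> rel_interior F} = 1"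
    and "\<forall>F G q. F facet_of P \<and> G facet_of P \<and> q extreme_point_of Q \<and>
           q \<in> rel_interior F \<and> q \<in> rel_interior G \<longrightarrow> F = G"
  shows "maximal_R_Delta2_free P"
proof -
  obtain T where T: "R_unimodular_map T" "Q = T ` unit_square"
    using assms(1) by blast
  obtain b c1 c2 where c: "unimodular_basis c1 c2" and Q: "Q = para_box b c1 c2"
    using R_unimodular_image_unit_square[OF T(1)] unfolding T(2)[symmetric] .
  have c12: "cross2 c1 c2 \<noteq> 0"
    using c by (auto simp: unimodular_basis_def)
  obtain a u v where uv: "cross2 u v \<noteq> 0" and P: "P = para_box a u v"
    using assms(2) parallelogram_eq_para_box by blast
  have "\<exists>q\<in>{q. q extreme_point_of Q}. q \<in> rel_interior F" if "F facet_of para_box a u v" for F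
  proof -
    have "{q. q extreme_point_of Q \<and> q \<in> rel_interior F} \<noteq> {}"
      using assms(3) that unfolding P by (metis card.empty zero_neq_one)
    then show ?thesis
      by blast
  qed
  then obtain q1 q2 q3 q4 where q: "q1 extreme_point_of Q" "q2 extreme_point_of Q"
    "q3 extreme_point_of Q" "q4 extreme_point_of Q" and touch: "touches_sides a u v q1 q2 q3 q4"
    using exists_touches_sides[OF uv] by blast
  have corners: "{q1, q2, q3, q4} \<subseteq> frame_map b c1 c2 ` unit_corners"
    using q extreme_point_of_para_box[OF c12] unfolding Q by blast
  have "R_Delta2_free (para_box a u v)"
    using para_box_R_Delta2_free[OF uv c12] touching_square_skew_lattice_wide[OF c touch corners]
    by blast
  then show ?thesis
    unfolding maximal_R_Delta2_free_def P using para_box_maximal[OF uv c touch corners] by blast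
qed

end
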